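(* Let $1\le k<m$ and let $H$ be a $k$-uniform hypergraph on $m$ vertices that is non-empty (has at least one edge) and non-complete (does not contain all $k$-subsets as edges). Then the number of automorphisms of $H$ satisfies $|\mathrm{Aut}(H)|\le \dfrac{m!}{m-k+1}$.
   Context: A hypergraph $H=(V,E)$ is $k$-uniform if every edge $e\in E$ is a subset of $V$ of size exactly $k$. An automorphism of $H$ is a permutation $\pi$ of $V$ such that $\{\pi(e):e\in E\}=E$; $\mathrm{Aut}(H)$ is the set of all automorphisms. *)

theory Defs
  imports Complex_Main "HOL-Combinatorics.Permutations"
begin

definition uniform_hypergraph :: "nat \<Rightarrow> 'a set \<Rightarrow> 'a set set \<Rightarrow> bool" where
  "uniform_hypergraph k V E \<longleftrightarrow> (\<forall>e\<in>E. e \<subseteq> V \<and> card e = k)"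

definition hyp_aut :: "'a set \<Rightarrow> 'a set set \<Rightarrow> ('a \<Rightarrow> 'a) set" where
  "hyp_aut V E = {\<pi>. \<pi> permutes V \<and> (\<lambda>e. \<pi> ` e) ` E = E}"

end

theory Submission
  imports Defs
begin

text \<open>
  By orbit--stabiliser, |Aut(H)| times the number of hypergraphs \<pi>(H) is m!, so it suffices to
  exhibit m - k + 1 distinct images. Since H is neither empty nor complete, an exchange argument
  yields a (k-1)-set S whose link T = {w \<notin> S. S \<union> {w} \<in> H} is a proper nonempty subset of
  the m - k + 1 vertices outside S. Permuting these vertices moves T to every subset of the same
  size, so the links of the images \<pi>(H) already take at least binomial(m - k + 1, |T|)
  \<ge> m - k + 1 values.
\<close>

definition hyp_orbit :: "'a set \<Rightarrow> 'a set set \<Rightarrow> 'a set set set" where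
  "hyp_orbit V E = (\<lambda>\<pi>. (\<lambda>e. \<pi> ` e) ` E) ` {\<pi>. \<pi> permutes V}"

definition hyp_link :: "'a set \<Rightarrow> 'a set \<Rightarrow> 'a set set \<Rightarrow> 'a set" where
  "hyp_link V S E = {w \<in> V - S. insert w S \<in> E}"

lemma permutes_image_family_iff:
  assumes "\<pi> permutes V"
  shows "X \<in> (\<lambda>e. \<pi> ` e) ` E \<longleftrightarrow> inv \<pi> ` X \<in> E"
proof
  assume "X \<in> (\<lambda>e. \<pi> ` e) ` E"
  then show "inv \<pi> ` X \<in> E"
    using permutes_inj[OF assms] by (auto simp: image_comp)
next
  assume "inv \<pi> ` X \<in> E"
  moreover have "X = \<pi> ` (inv \<pi> ` X)"
    using permutes_surj[OF assms] by (simp add: image_comp surj_iff)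
  ultimately show "X \<in> (\<lambda>e. \<pi> ` e) ` E" by blast
qed

lemma hyp_link_permutes_image:
  assumes "\<pi> permutes V - S"
  shows "hyp_link V S ((\<lambda>e. \<pi> ` e) ` E) = \<pi> ` hyp_link V S E"
proof -
  have \<pi>V: "\<pi> permutes V" using assms by (rule permutes_subset) auto
  have inv_fix: "inv \<pi> ` insert w S = insert (inv \<pi> w) S" for w
    using permutes_not_in[OF permutes_inv[OF assms]] by auto
  have link_iff: "w \<in> hyp_link V S ((\<lambda>e. \<pi> ` e) ` E) \<longleftrightarrow> inv \<pi> w \<in> hyp_link V S E" for w
  proof -
    have "inv \<pi> w \<in> V - S \<longleftrightarrow> w \<in> V - S"
      by (rule permutes_in_image[OF permutes_inv[OF assms]])
    then show ?thesis
      using permutes_image_family_iff[OF \<pi>V] inv_fix unfolding hyp_link_def by auto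
  qed
  have "\<pi> ` hyp_link V S E = {w. inv \<pi> w \<in> hyp_link V S E}"
    using bij_image_Collect_eq[OF permutes_bij[OF assms], of "\<lambda>w. w \<in> hyp_link V S E"] by simp
  with link_iff show ?thesis by blast
qed

lemma ex_permutes_image_eq:
  assumes "finite W" "T \<subseteq> W" "U \<subseteq> W" "card T = card U"
  obtains \<pi> where "\<pi> permutes W" "\<pi> ` T = U"
proof -
  have fin: "finite T" "finite U" "finite (W - T)" "finite (W - U)"
    using assms(1-3) finite_subset by auto
  obtain f where f: "bij_betw f T U"
    using finite_same_card_bij[OF fin(1,2) assms(4)] by blast
  have "card (W - T) = card (W - U)"
    using assms by (simp add: card_Diff_subset finite_subset)
  then obtain g where g: "bij_betw g (W - T) (W - U)"
    using finite_same_card_bij[OF fin(3,4)] by blast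
  define \<pi> where "\<pi> x = (if x \<in> W then if x \<in> T then f x else g x else x)" for x
  have "bij_betw (\<lambda>x. if x \<in> T then f x else g x) (T \<union> (W - T)) (U \<union> (W - U))"
    using f g by (intro bij_betw_disjoint_Un) auto
  moreover have "T \<union> (W - T) = W" "U \<union> (W - U) = W"
    using assms(2,3) by auto
  moreover have "bij_betw \<pi> W W \<longleftrightarrow> bij_betw (\<lambda>x. if x \<in> T then f x else g x) W W"
    by (rule bij_betw_cong) (simp add: \<pi>_def)
  ultimately have "bij_betw \<pi> W W" by simp
  then have "\<pi> permutes W" by (rule bij_imp_permutes) (simp add: \<pi>_def)
  moreover have "\<pi> ` T = U"
    using f assms(2) by (auto simp: \<pi>_def bij_betw_def)
  ultimately show thesis by (rule that)
qed

lemma finite_hyp_orbit: "finite V \<Longrightarrow> finite (hyp_orbit V E)"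
  unfolding hyp_orbit_def by (intro finite_imageI finite_permutations)

lemma binomial_le_card_hyp_orbit:
  assumes "finite V"
  shows "card (V - S) choose card (hyp_link V S E) \<le> card (hyp_orbit V E)"
proof -
  let ?W = "V - S" and ?T = "hyp_link V S E"
  have "{U. U \<subseteq> ?W \<and> card U = card ?T} \<subseteq> hyp_link V S ` hyp_orbit V E"
  proof safe
    fix U assume U: "U \<subseteq> ?W" "card U = card ?T"
    obtain \<pi> where \<pi>: "\<pi> permutes ?W" "\<pi> ` ?T = U"
      using ex_permutes_image_eq[of ?W ?T U] assms U by (auto simp: hyp_link_def)
    have "\<pi> permutes V" using \<pi>(1) by (rule permutes_subset) auto
    then have "(\<lambda>e. \<pi> ` e) ` E \<in> hyp_orbit V E" by (auto simp: hyp_orbit_def)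
    moreover have "U = hyp_link V S ((\<lambda>e. \<pi> ` e) ` E)"
      using hyp_link_permutes_image[OF \<pi>(1)] \<pi>(2) by simp
    ultimately show "U \<in> hyp_link V S ` hyp_orbit V E" by blast
  qed
  then have "card {U. U \<subseteq> ?W \<and> card U = card ?T} \<le> card (hyp_link V S ` hyp_orbit V E)"
    using assms by (intro card_mono finite_imageI finite_hyp_orbit)
  also have "\<dots> \<le> card (hyp_orbit V E)"
    by (rule card_image_le[OF finite_hyp_orbit[OF assms]])
  finally show ?thesis using assms by (simp add: n_subsets)
qed

lemma card_hyp_orbit_mult_card_hyp_aut_le:
  assumes "finite V"
  shows "card (hyp_orbit V E) * card (hyp_aut V E) \<le> fact (card V)"
proof -
  define rep where "rep F = (SOME \<pi>. \<pi> permutes V \<and> (\<lambda>e. \<pi> ` e) ` E = F)" for F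
  have rep: "rep F permutes V" "(\<lambda>e. rep F ` e) ` E = F" if "F \<in> hyp_orbit V E" for F
    using someI_ex[of "\<lambda>\<pi>. \<pi> permutes V \<and> (\<lambda>e. \<pi> ` e) ` E = F"] that
    by (auto simp: hyp_orbit_def rep_def)
  define coset where "coset p = rep (fst p) \<circ> snd p" for p :: "'a set set \<times> ('a \<Rightarrow> 'a)"
  have image_coset: "(\<lambda>e. coset (F, \<sigma>) ` e) ` E = F"
    if "F \<in> hyp_orbit V E" "\<sigma> \<in> hyp_aut V E" for F \<sigma>
  proof -
    have "(\<lambda>e. coset (F, \<sigma>) ` e) ` E = (\<lambda>e. rep F ` e) ` ((\<lambda>e. \<sigma> ` e) ` E)"
      by (simp add: coset_def image_comp)
    also have "\<dots> = F" using that rep(2) by (simp add: hyp_aut_def)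
    finally show ?thesis .
  qed
  have "inj_on coset (hyp_orbit V E \<times> hyp_aut V E)"
  proof (rule inj_onI, clarify)
    fix F \<sigma> G \<tau>
    assume F: "F \<in> hyp_orbit V E" "\<sigma> \<in> hyp_aut V E" and G: "G \<in> hyp_orbit V E" "\<tau> \<in> hyp_aut V E"
      and eq: "coset (F, \<sigma>) = coset (G, \<tau>)"
    have "F = G" using image_coset[OF F] image_coset[OF G] eq by simp
    moreover from this have "rep F \<circ> \<sigma> = rep F \<circ> \<tau>" using eq by (simp add: coset_def)
    then have "\<sigma> = \<tau>"
      using permutes_inj[OF rep(1)[OF F(1)]] by (simp add: fun_eq_iff inj_eq)
    ultimately show "F = G \<and> \<sigma> = \<tau>" ..
  qed
  moreover have "coset ` (hyp_orbit V E \<times> hyp_aut V E) \<subseteq> {\<pi>. \<pi> permutes V}"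
    using rep(1) by (auto simp: coset_def hyp_aut_def intro: permutes_compose)
  ultimately have "card (hyp_orbit V E \<times> hyp_aut V E) \<le> card {\<pi>. \<pi> permutes V}"
    using assms by (intro card_inj_on_le finite_permutations)
  then show ?thesis
    using assms by (simp add: card_cartesian_product card_permutations)
qed

lemma uniform_hypergraph_exchange:
  assumes "finite V" "uniform_hypergraph k V E"
    and "e \<in> E" "f \<subseteq> V" "card f = k" "f \<notin> E"
  shows "\<exists>S a b. a \<notin> S \<and> b \<notin> S \<and> b \<in> V \<and> insert a S \<in> E \<and> insert b S \<notin> E"
  using assms(3)
proof (induction "card (e - f)" arbitrary: e rule: less_induct)
  case less
  have e: "e \<subseteq> V" "card e = k"
    using assms(2) less.prems by (auto simp: uniform_hypergraph_def)
  have fin: "finite e" "finite f" using e(1) assms(1,4) finite_subset by auto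
  have "e \<noteq> f" using less.prems assms(6) by auto
  then have "\<not> e \<subseteq> f" "\<not> f \<subseteq> e"
    using card_subset_eq fin e(2) assms(5) by metis+
  then obtain x y where x: "x \<in> e" "x \<notin> f" and y: "y \<in> f" "y \<notin> e" by blast
  define g where "g = insert y (e - {x})"
  show ?case
  proof (cases "g \<in> E")
    case True
    have "g - f = (e - f) - {x}" using y by (auto simp: g_def)
    then have "card (g - f) < card (e - f)"
      using x fin card_Diff1_less[of "e - f" x] by simp
    then show ?thesis using less.hyps True by blast
  next
    case False
    then show ?thesis
      using x y assms(4) less.prems insert_Diff[OF x(1)] unfolding g_def
      by (intro exI[of _ "e - {x}"] exI[of _ x] exI[of _ y]) auto
  qed
qed

theorem theorem3p4:
  fixes V :: "'a set" and E :: "'a set set" and k m :: nat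
  assumes "finite V" and "card V = m"
    and "1 \<le> k" and "k < m"
    and "uniform_hypergraph k V E"
    and "E \<noteq> {}"
    and "E \<noteq> {e. e \<subseteq> V \<and> card e = k}"
  shows "real (card (hyp_aut V E)) \<le> real (fact m) / real (m - k + 1)"
proof -
  obtain e where "e \<in> E" using assms(6) by blast
  moreover obtain f where "f \<subseteq> V" "card f = k" "f \<notin> E"
    using assms(5,7) by (auto simp: uniform_hypergraph_def)
  ultimately obtain S a b where ab: "a \<notin> S" "b \<notin> S" "b \<in> V" "insert a S \<in> E" "insert b S \<notin> E"
    using uniform_hypergraph_exchange[OF assms(1,5)] by blast
  have aS: "insert a S \<subseteq> V" "card (insert a S) = k"
    using assms(5) ab(4) by (auto simp: uniform_hypergraph_def)
  moreover have "finite S" using aS(1) assms(1) finite_subset by auto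
  ultimately have "card (V - S) = m - k + 1"
    using assms(1-4) ab(1) by (simp add: card_Diff_subset)
  moreover have "0 < card (hyp_link V S E)" "card (hyp_link V S E) < card (V - S)"
    using ab aS assms(1) by (auto simp: hyp_link_def intro!: card_gt_0_iff[THEN iffD2] psubset_card_mono)
  ultimately have "m - k + 1 \<le> card (hyp_orbit V E)"
    using upper_le_binomial binomial_le_card_hyp_orbit[OF assms(1)] order_trans by metis
  then have "(m - k + 1) * card (hyp_aut V E) \<le> fact m"
    using card_hyp_orbit_mult_card_hyp_aut_le[OF assms(1)] assms(2)
    by (metis mult_le_mono1 order_trans)
  then have "real (m - k + 1) * real (card (hyp_aut V E)) \<le> fact m"
    by (metis of_nat_fact of_nat_le_iff of_nat_mult)
  then show ?thesis using assms(4) by (simp add: field_simps)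
qed

end
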